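(* Let $L\in\mathbb{R}^{N\times N}$ be a nonnegative liabilities matrix, let $\mathbf{e}\in\mathbb{R}^N_{\ge 0}$ be the cash-on-hand vector, and let $C\ge 0$ be a given total cash injection amount. Assume the network is such that for every cash injection vector $\mathbf{c}\ge\mathbf{0}$ the clearing payment vector $\mathbf{p}(\mathbf{c})$ exists and is unique. Then the problem \[ \text{minimize } D=\mathbf{1}^T(\bar{\mathbf p}-\mathbf p(\mathbf c)) \text{ over } \mathbf c\ge \mathbf 0 \text{ with } \mathbf 1^T\mathbf c=C \] has a solution, and one is obtained by solving the linear program \[ \text{maximize } \mathbf 1^T\mathbf p \text{ over } (\mathbf c,\mathbf p)\in\mathbb R^{2N} \] subject to $\mathbf 1^T\mathbf c=C$, $\mathbf c\ge\mathbf 0$, $\mathbf 0\le\mathbf p\le\bar{\mathbf p}$, $\mathbf p\le\Pi^T\mathbf p+\mathbf e+\mathbf c$: namely, if $(\mathbf p^*,\mathbf c^* )$ is an optimal solution of this linear program, then $\mathbf c^*$ attains the minimum of $D$ over all allocations $\mathbf c\ge\mathbf 0$ with $\mathbf 1^T\mathbf c=C$ (and $\mathbf p^*=\mathbf p(\mathbf c^* )$).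
   Context: Financial network model: $N$ nodes; $L_{ij}\ge 0$ is the amount node $i$ owes node $j$, all due at a single date. All vector inequalities are componentwise; $\mathbf 0,\mathbf 1$ are the all-zeros and all-ones vectors in $\mathbb R^N$. $\bar p_i=\sum_j L_{ij}$ is the total amount node $i$ owes. $\Pi_{ij}=L_{ij}/\bar p_i$ if $\bar p_i\neq 0$ and $\Pi_{ij}=0$ otherwise; $\Pi$ is the matrix with entries $\Pi_{ij}$. $\mathbf e\ge\mathbf 0$ is cash on hand and $\mathbf c\ge\mathbf 0$ is external cash injection. Given a payment vector $\mathbf p$ ($p_i$ = total amount node $i$ actually pays its creditors), node $i$ receives $q_i=\sum_j \Pi_{ji}p_j$ and has total funds $r_i=q_i+e_i+c_i$. A clearing payment vector for given $L,\mathbf e,\mathbf c$ is a vector $\mathbf p$ with $p_i=\min(\bar p_i, r_i)$ for every $i$, i.e. $\mathbf p=\min(\bar{\mathbf p},\Pi^T\mathbf p+\mathbf e+\mathbf c)$ componentwise (a node pays its liabilities in full if its funds suffice, otherwise pays all of its funds, distributed to creditors in proportion to the amounts owed). $D=\mathbf 1^T(\bar{\mathbf p}-\mathbf p)$ is the total unpaid liabilities. *)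

theory Defs
  imports "HOL-Analysis.Analysis"
begin

text \<open>Financial network with node index type 'n (finite). L $ i $ j = amount node i owes node j.\<close>

definition pbar :: "real^'n^'n \<Rightarrow> real^'n::finite" where
  "pbar L = (\<chi> i. \<Sum>j\<in>UNIV. L $ i $ j)"

definition relmat :: "real^'n^'n \<Rightarrow> real^'n^'n::finite" where
  "relmat L = (\<chi> i j. if pbar L $ i \<noteq> 0 then L $ i $ j / pbar L $ i else 0)"

definition is_clearing :: "real^'n^'n \<Rightarrow> real^'n \<Rightarrow> real^'n \<Rightarrow> real^'n::finite \<Rightarrow> bool" where
  "is_clearing L e c p \<longleftrightarrow>
     (\<forall>i. p $ i = min (pbar L $ i) ((\<Sum>j\<in>UNIV. relmat L $ j $ i * p $ j) + e $ i + c $ i))"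

text \<open>The (unique, when it exists uniquely) clearing vector p(c).\<close>
definition clearing_vec :: "real^'n^'n \<Rightarrow> real^'n \<Rightarrow> real^'n \<Rightarrow> real^'n::finite" where
  "clearing_vec L e c = (THE p. is_clearing L e c p)"

definition unpaid :: "real^'n^'n \<Rightarrow> real^'n \<Rightarrow> real^'n::finite \<Rightarrow> real" where
  "unpaid L e c = (\<Sum>i\<in>UNIV. pbar L $ i - clearing_vec L e c $ i)"

definition admissible :: "real \<Rightarrow> real^'n::finite \<Rightarrow> bool" where
  "admissible C c \<longleftrightarrow> (\<forall>i. 0 \<le> c $ i) \<and> (\<Sum>i\<in>UNIV. c $ i) = C"

definition lp_feasible :: "real^'n^'n \<Rightarrow> real^'n \<Rightarrow> real \<Rightarrow> real^'n \<Rightarrow> real^'n::finite \<Rightarrow> bool" where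
  "lp_feasible L e C c p \<longleftrightarrow> admissible C c \<and>
     (\<forall>i. 0 \<le> p $ i \<and> p $ i \<le> pbar L $ i \<and>
          p $ i \<le> (\<Sum>j\<in>UNIV. relmat L $ j $ i * p $ j) + e $ i + c $ i)"

definition lp_optimal :: "real^'n^'n \<Rightarrow> real^'n \<Rightarrow> real \<Rightarrow> real^'n \<Rightarrow> real^'n::finite \<Rightarrow> bool" where
  "lp_optimal L e C c p \<longleftrightarrow> lp_feasible L e C c p \<and>
     (\<forall>c' p'. lp_feasible L e C c' p' \<longrightarrow> (\<Sum>i\<in>UNIV. p' $ i) \<le> (\<Sum>i\<in>UNIV. p $ i))"

end

theory Submission
  imports Defs
begin

text \<open>
  For a fixed injection c the clearing condition says that p is a fixed point
  of the clearing map  \<Phi>(p) = min(pbar, \<Pi>^T p + e + c),  which is monotone (\<Pi> is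
  nonnegative) and bounded by pbar.  On the conditionally complete lattice real^'n the
  supremum of all vectors 0 \<le> p \<le> \<Phi>(p) is then a fixed point dominating every such p
  (a Tarski-type argument).  Under uniqueness this greatest fixed point IS the clearing
  vector p(c); since the LP constraints for a fixed c say exactly 0 \<le> p \<le> \<Phi>(p), every
  LP-feasible p satisfies p \<le> p(c), while (c, p(c)) itself is feasible.
  Hence an optimal (c*, p*) has p* = p(c*), and 1^T p(c*) \<ge> 1^T p(c) for all admissible c,
  i.e. c* minimises D = 1^T pbar - 1^T p(c).  An optimal solution exists because the LP
  feasible set is nonempty and compact.
\<close>

lemma sup_of_postfixpoints:
  fixes f :: "'a::conditionally_complete_lattice \<Rightarrow> 'a"
  assumes mono: "mono f" and start: "a \<le> f a" and bound: "\<And>x. f x \<le> b"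
  defines "S \<equiv> {x. a \<le> x \<and> x \<le> f x}"
  shows "f (Sup S) = Sup S" and "Sup S \<in> S" and "\<And>x. x \<in> S \<Longrightarrow> x \<le> Sup S"
proof -
  have nonempty: "S \<noteq> {}" using start by (auto simp: S_def)
  have bdd: "bdd_above S"
    by (rule bdd_aboveI[of _ b]) (auto simp: S_def intro: order_trans bound)
  show upper: "x \<le> Sup S" if "x \<in> S" for x
    using that bdd by (rule cSup_upper)
  have post: "Sup S \<le> f (Sup S)"
  proof (rule cSup_least[OF nonempty])
    fix x assume "x \<in> S"
    then have "x \<le> f x" "f x \<le> f (Sup S)"
      using upper mono by (auto simp: S_def mono_def)
    then show "x \<le> f (Sup S)" by (rule order_trans)
  qed
  have "a \<le> Sup S" using start upper by (auto simp: S_def)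
  then have image_in: "f (Sup S) \<in> S"
    using post mono by (auto simp: S_def mono_def intro: order_trans)
  then show fixed: "f (Sup S) = Sup S" using post upper by (auto intro: order.antisym)
  show "Sup S \<in> S" using image_in fixed by simp
qed

lemma vec_eq_of_le_and_sum_le:
  fixes p q :: "'a::ordered_ab_group_add^'n::finite"
  assumes le: "p \<le> q" and sum_le: "(\<Sum>i\<in>UNIV. q $ i) \<le> (\<Sum>i\<in>UNIV. p $ i)"
  shows "p = q"
proof -
  have gaps_nonneg: "\<forall>i\<in>UNIV. 0 \<le> q $ i - p $ i"
    using le by (simp add: less_eq_vec_def)
  have "(\<Sum>i\<in>UNIV. p $ i) \<le> (\<Sum>i\<in>UNIV. q $ i)"
    using le by (intro sum_mono) (simp add: less_eq_vec_def)
  then have "(\<Sum>i\<in>UNIV. q $ i - p $ i) = 0"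
    using sum_le by (simp add: sum_subtractf)
  then have "\<forall>i. q $ i - p $ i = 0"
    using gaps_nonneg by (simp add: sum_nonneg_eq_0_iff)
  then show ?thesis by (simp add: vec_eq_iff)
qed

lemma pbar_nonneg: "\<forall>i j. 0 \<le> L $ i $ j \<Longrightarrow> 0 \<le> pbar L"
  unfolding pbar_def less_eq_vec_def by (simp add: sum_nonneg)

lemma relmat_nonneg: "\<forall>i j. 0 \<le> L $ i $ j \<Longrightarrow> 0 \<le> relmat L $ j $ i"
  using pbar_nonneg[of L] unfolding relmat_def less_eq_vec_def by simp

definition clearing_map :: "real^'n^'n \<Rightarrow> real^'n \<Rightarrow> real^'n \<Rightarrow> real^'n \<Rightarrow> real^'n::finite" where
  "clearing_map L e c p =
     (\<chi> i. min (pbar L $ i) ((\<Sum>j\<in>UNIV. relmat L $ j $ i * p $ j) + e $ i + c $ i))"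

lemma is_clearing_iff_fixed_point: "is_clearing L e c p \<longleftrightarrow> clearing_map L e c p = p"
  unfolding is_clearing_def clearing_map_def vec_eq_iff by (auto simp: eq_commute)

lemma lp_feasible_iff_postfixed:
  "lp_feasible L e C c p \<longleftrightarrow> admissible C c \<and> 0 \<le> p \<and> p \<le> clearing_map L e c p"
  unfolding lp_feasible_def clearing_map_def less_eq_vec_def by auto

lemma clearing_map_mono:
  fixes L :: "real^'n::finite^'n"
  assumes "\<forall>i j. 0 \<le> L $ i $ j"
  shows "mono (clearing_map L e c)"
proof (rule monoI)
  fix p q :: "real^'n" assume "p \<le> q"
  then have "(\<Sum>j\<in>UNIV. relmat L $ j $ i * p $ j) \<le> (\<Sum>j\<in>UNIV. relmat L $ j $ i * q $ j)" for i
    using relmat_nonneg[OF assms] by (intro sum_mono mult_left_mono) (auto simp: less_eq_vec_def)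
  then show "clearing_map L e c p \<le> clearing_map L e c q"
    unfolding clearing_map_def less_eq_vec_def vec_lambda_beta
    by (intro allI min.mono order_refl add_right_mono)
qed

lemma clearing_map_le_pbar: "clearing_map L e c p \<le> pbar L"
  by (simp add: clearing_map_def less_eq_vec_def)

lemma clearing_map_zero_nonneg:
  assumes "\<forall>i j. 0 \<le> L $ i $ j" and "0 \<le> e" and "0 \<le> c"
  shows "0 \<le> clearing_map L e c 0"
  using assms pbar_nonneg[OF assms(1)] by (simp add: clearing_map_def less_eq_vec_def)

lemma greatest_clearing_vector:
  fixes L :: "real^'n::finite^'n"
  assumes "\<forall>i j. 0 \<le> L $ i $ j" and "0 \<le> e" and "0 \<le> c"
  obtains q where "is_clearing L e c q" and "0 \<le> q"
    and "\<And>p. 0 \<le> p \<Longrightarrow> p \<le> clearing_map L e c p \<Longrightarrow> p \<le> q"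
  using sup_of_postfixpoints[OF clearing_map_mono[OF assms(1)] clearing_map_zero_nonneg[OF assms]
      clearing_map_le_pbar]
  by (auto simp: is_clearing_iff_fixed_point)

text \<open>When the clearing vector is unique, p(c) is that greatest clearing vector; hence it
  is LP-feasible for c and dominates every LP-feasible payment vector for c.\<close>

lemma clearing_vec_greatest:
  fixes L :: "real^'n::finite^'n"
  assumes "\<forall>i j. 0 \<le> L $ i $ j" and "0 \<le> e" and "0 \<le> c"
    and unique: "\<exists>!p. is_clearing L e c p"
  shows "0 \<le> clearing_vec L e c"
    and "clearing_vec L e c \<le> clearing_map L e c (clearing_vec L e c)"
    and "\<And>p. 0 \<le> p \<Longrightarrow> p \<le> clearing_map L e c p \<Longrightarrow> p \<le> clearing_vec L e c"
proof -
  obtain q where clearing: "is_clearing L e c q" and "0 \<le> q"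
    and greatest: "\<And>p. 0 \<le> p \<Longrightarrow> p \<le> clearing_map L e c p \<Longrightarrow> p \<le> q"
    using greatest_clearing_vector[OF assms(1-3)] by blast
  have q_eq: "clearing_vec L e c = q"
    unfolding clearing_vec_def using unique clearing by (rule the1_equality)
  show "0 \<le> clearing_vec L e c" using \<open>0 \<le> q\<close> q_eq by simp
  show "clearing_vec L e c \<le> clearing_map L e c (clearing_vec L e c)"
    using clearing q_eq by (simp add: is_clearing_iff_fixed_point)
  show "p \<le> clearing_vec L e c" if "0 \<le> p" "p \<le> clearing_map L e c p" for p
    using greatest[OF that] q_eq by simp
qed

lemma unpaid_eq: "unpaid L e c = (\<Sum>i\<in>UNIV. pbar L $ i) - (\<Sum>i\<in>UNIV. clearing_vec L e c $ i)"
  unfolding unpaid_def by (simp add: sum_subtractf)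

text \<open>The LP has an optimal solution: its feasible set is nonempty (put all cash on one
  node and pay nothing) and compact, and the objective is continuous.\<close>

lemma lp_feasible_set_compact:
  "compact {x :: (real^'n) \<times> (real^'n::finite). lp_feasible L e C (fst x) (snd x)}"
  (is "compact ?S")
proof (rule compact_eq_bounded_closed[THEN iffD2], rule conjI)
  show "bounded ?S"
  proof (rule bounded_subset)
    show "bounded (cbox 0 (\<chi> i. C) \<times> cbox 0 (pbar L))"
      by (intro bounded_Times bounded_cbox)
    show "?S \<subseteq> cbox 0 (\<chi> i. C) \<times> cbox 0 (pbar L)"
    proof
      fix x assume "x \<in> ?S"
      then have feasible: "lp_feasible L e C (fst x) (snd x)" by simp
      have "fst x $ i \<le> (\<Sum>j\<in>UNIV. fst x $ j)" for i
        using feasible unfolding lp_feasible_def admissible_def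
        by (intro member_le_sum) auto
      then show "x \<in> cbox 0 (\<chi> i. C) \<times> cbox 0 (pbar L)"
        using feasible unfolding lp_feasible_def admissible_def
        by (cases x) (auto simp: mem_box_cart)
    qed
  qed
  have "?S = {x. (\<Sum>i\<in>UNIV. fst x $ i) = C} \<inter>
     (\<Inter>i. {x. 0 \<le> fst x $ i} \<inter> {x. 0 \<le> snd x $ i} \<inter> {x. snd x $ i \<le> pbar L $ i}
       \<inter> {x. snd x $ i \<le> (\<Sum>j\<in>UNIV. relmat L $ j $ i * snd x $ j) + e $ i + fst x $ i})"
    unfolding lp_feasible_def admissible_def by auto
  also have "closed \<dots>"
    by (intro closed_Int closed_INT closed_Collect_eq closed_Collect_le continuous_intros ballI)
  finally show "closed ?S" .
qed

lemma lp_optimal_exists: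
  fixes L :: "real^'n::finite^'n"
  assumes "\<forall>i j. 0 \<le> L $ i $ j" and "0 \<le> e" and "0 \<le> C"
  shows "\<exists>c p. lp_optimal L e C c p"
proof -
  let ?S = "{x :: (real^'n) \<times> (real^'n). lp_feasible L e C (fst x) (snd x)}"
  obtain i0 :: 'n where True by blast
  define c0 :: "real^'n" where "c0 = (\<chi> i. if i = i0 then C else 0)"
  have "admissible C c0"
    unfolding admissible_def c0_def using assms(3) by (simp add: if_distrib cong: if_cong)
  then have "(c0, 0) \<in> ?S"
    using pbar_nonneg[OF assms(1)] assms(2) unfolding lp_feasible_def admissible_def less_eq_vec_def
    by auto
  then have "?S \<noteq> {}" by blast
  moreover have "continuous_on ?S (\<lambda>x. \<Sum>i\<in>UNIV. snd x $ i)"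
    by (intro continuous_intros)
  ultimately obtain x where "x \<in> ?S"
    and "\<forall>y\<in>?S. (\<Sum>i\<in>UNIV. snd y $ i) \<le> (\<Sum>i\<in>UNIV. snd x $ i)"
    using continuous_attains_sup[OF lp_feasible_set_compact] by blast
  then have "lp_optimal L e C (fst x) (snd x)"
    unfolding lp_optimal_def by auto
  then show ?thesis by blast
qed

lemma lp_optimal_solves_allocation:
  fixes L :: "real^'n::finite^'n"
  assumes L_nonneg: "\<forall>i j. 0 \<le> L $ i $ j" and e_nonneg: "0 \<le> e"
    and uniq: "\<forall>c::real^'n. (\<forall>i. 0 \<le> c $ i) \<longrightarrow> (\<exists>!p. is_clearing L e c p)"
    and opt: "lp_optimal L e C c p"
  shows "admissible C c" and "p = clearing_vec L e c"
    and "\<And>c'. admissible C c' \<Longrightarrow> unpaid L e c \<le> unpaid L e c'"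
proof -
  note clearing = clearing_vec_greatest[OF L_nonneg e_nonneg]
  have nonneg_if_admissible: "0 \<le> c'" "\<exists>!p. is_clearing L e c' p" if "admissible C c'" for c'
    using that uniq unfolding admissible_def less_eq_vec_def by auto
  have cv_feasible: "lp_feasible L e C c' (clearing_vec L e c')" if "admissible C c'" for c'
    using that clearing[OF nonneg_if_admissible[OF that]]
    by (simp add: lp_feasible_iff_postfixed)
  have cv_le_opt: "(\<Sum>i\<in>UNIV. clearing_vec L e c' $ i) \<le> (\<Sum>i\<in>UNIV. p $ i)"
    if "admissible C c'" for c'
    using opt cv_feasible[OF that] unfolding lp_optimal_def by blast
  have feasible: "lp_feasible L e C c p" using opt unfolding lp_optimal_def by blast
  then show admissible: "admissible C c" by (simp add: lp_feasible_iff_postfixed)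
  have "p \<le> clearing_vec L e c"
    using feasible clearing(3)[OF nonneg_if_admissible[OF admissible]]
    by (simp add: lp_feasible_iff_postfixed)
  then show p_eq: "p = clearing_vec L e c"
    using cv_le_opt[OF admissible] by (rule vec_eq_of_le_and_sum_le)
  show "unpaid L e c \<le> unpaid L e c'" if "admissible C c'" for c'
    using cv_le_opt[OF that] unfolding unpaid_eq p_eq by simp
qed

theorem theorem1:
  fixes L :: "real^'n::finite^'n" and e :: "real^'n" and C :: real
  assumes L_nonneg: "\<forall>i j. 0 \<le> L $ i $ j"
    and e_nonneg: "\<forall>i. 0 \<le> e $ i"
    and C_nonneg: "0 \<le> C"
    and uniq: "\<forall>c::real^'n. (\<forall>i. 0 \<le> c $ i) \<longrightarrow> (\<exists>!p. is_clearing L e c p)"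
  shows "(\<exists>c. admissible C c \<and> (\<forall>c'. admissible C c' \<longrightarrow> unpaid L e c \<le> unpaid L e c'))
    \<and> (\<exists>c p. lp_optimal L e C c p)
    \<and> (\<forall>c p. lp_optimal L e C c p \<longrightarrow>
          admissible C c
          \<and> (\<forall>c'. admissible C c' \<longrightarrow> unpaid L e c \<le> unpaid L e c')
          \<and> p = clearing_vec L e c)"
proof -
  have e_vec_nonneg: "0 \<le> e" using e_nonneg by (simp add: less_eq_vec_def)
  note solves = lp_optimal_solves_allocation[OF L_nonneg e_vec_nonneg uniq]
  have exists: "\<exists>c p. lp_optimal L e C c p"
    using L_nonneg e_vec_nonneg C_nonneg by (rule lp_optimal_exists)
  then have "\<exists>c. admissible C c \<and> (\<forall>c'. admissible C c' \<longrightarrow> unpaid L e c \<le> unpaid L e c')"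
    using solves by blast
  then show ?thesis using exists solves by blast
qed

end
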